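(* Let $n\in\mathbb{R}$. The Legendre operator $\mathscr{L}^n_n=\frac{1}{\sin\theta}\left[\frac{d}{d\theta}\left(\sin\theta\frac{d}{d\theta}\right)+n(n+1)\sin\theta-\frac{n^2}{\sin\theta}\right]$ on $(0,\pi)$ is limit-circle (at both endpoints $0$ and $\pi$) if and only if $n\in(-1,1)$.
   Context: $L^2_{\sin\theta}(a',b')$ denotes complex-valued functions square integrable on $(a',b')$ with respect to $\sin\theta\,d\theta$. A Sturm–Liouville operator $T$ on $(0,\pi)$ with weight $w=\sin\theta$ is limit-circle (LC) at $0$ if, for a given $\chi\in\mathbb{C}$, every solution of $Ty=\chi y$ lies in $L^2_{\sin\theta}(0,c)$ for some $c\in(0,\pi)$, and limit-point otherwise; similarly LC at $\pi$ if every solution lies in $L^2_{\sin\theta}(c,\pi)$; $T$ is LC if it is LC at both endpoints. (This property is independent of $\chi$.) *)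

theory Defs
  imports "HOL-Analysis.Analysis"
begin

definition L2_sin :: "(real \<Rightarrow> complex) \<Rightarrow> real \<Rightarrow> real \<Rightarrow> bool" where
  "L2_sin y a b \<longleftrightarrow> (\<lambda>t. (cmod (y t))\<^sup>2 * sin t) integrable_on {a<..<b}"

definition legendre_sol :: "real \<Rightarrow> complex \<Rightarrow> (real \<Rightarrow> complex) \<Rightarrow> bool" where
  "legendre_sol n chi y \<longleftrightarrow>
     (\<exists>y'. \<forall>t\<in>{0<..<pi}.
        (y has_vector_derivative y' t) (at t) \<and>
        ((\<lambda>s. complex_of_real (sin s) * y' s) has_vector_derivative
           ((chi * complex_of_real (sin t)
             - complex_of_real (n * (n + 1) * sin t - n\<^sup>2 / sin t)) * y t)) (at t))"

definition LC_at_0 :: "real \<Rightarrow> complex \<Rightarrow> bool" where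
  "LC_at_0 n chi \<longleftrightarrow>
     (\<forall>y. legendre_sol n chi y \<longrightarrow> (\<exists>c\<in>{0<..<pi}. L2_sin y 0 c))"

definition LC_at_pi :: "real \<Rightarrow> complex \<Rightarrow> bool" where
  "LC_at_pi n chi \<longleftrightarrow>
     (\<forall>y. legendre_sol n chi y \<longrightarrow> (\<exists>c\<in>{0<..<pi}. L2_sin y c pi))"

definition LC :: "real \<Rightarrow> complex \<Rightarrow> bool" where
  "LC n chi \<longleftrightarrow> LC_at_0 n chi \<and> LC_at_pi n chi"

end

(*
  Write m = |n|, lam = chi - n (n + 1) and z = sin t * y' for the quasi-derivative. In the variable
  s = ln tan (t/2) the equation becomes y_ss = (m^2 + lam sin^2 t) y, a perturbation of y_ss = m^2 y
  that decays like exp (2 s) at the endpoint 0; so solutions behave like tan (t/2) ^ (+-m), and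
  tan (t/2) ^ (-m) is square integrable against sin t near 0 exactly when m < 1.
  For m < 1 an energy estimate bounds every solution by C tan (t/2) ^ (-mu) with some mu < 1.
  For m >= 1, variation of constants around tan (t/2) ^ (+-m) and a continuity argument show that
  a solution which equals the large one at a point close to 0 stays above tan (t/2) ^ (-m) / 2,
  so it is not square integrable; such a solution is a combination of two power series solutions
  of the associated Gegenbauer equation with nonzero Wronskian.
  The endpoint pi reduces to 0 by the reflection t -> pi - t.
*)
theory Submission
  imports Defs "HOL-Real_Asymp.Real_Asymp"
begin

lemma norm_increment_le_of_derivative_bound:
  fixes f :: "real \<Rightarrow> 'a::banach"
  assumes "a \<le> b"
    and f': "\<And>x. x \<in> {a..b} \<Longrightarrow> (f has_vector_derivative f' x) (at x)"
    and G': "\<And>x. x \<in> {a..b} \<Longrightarrow> (G has_real_derivative g x) (at x)"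
    and bound: "\<And>x. x \<in> {a..b} \<Longrightarrow> norm (f' x) \<le> g x"
  shows "norm (f b - f a) \<le> G b - G a"
proof -
  have ftc_f: "(f' has_integral (f b - f a)) {a..b}"
    by (rule fundamental_theorem_of_calculus[OF \<open>a \<le> b\<close> has_vector_derivative_at_within, OF f'])
  have ftc_g: "(g has_integral (G b - G a)) {a..b}"
    using G' unfolding has_real_derivative_iff_has_vector_derivative
    by (rule fundamental_theorem_of_calculus[OF \<open>a \<le> b\<close> has_vector_derivative_at_within])
  have "norm (integral {a..b} f') \<le> integral {a..b} g"
    using ftc_f ftc_g bound by (intro integral_norm_bound_integral) auto
  with ftc_f ftc_g show ?thesis by (simp add: integral_unique)
qed

lemma bound_from_self_improving_bound:
  fixes U :: "real \<Rightarrow> real"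
  assumes "a \<le> b" "continuous_on {a..b} U"
    and improve: "\<And>M. \<forall>t\<in>{a..b}. U t \<le> M \<Longrightarrow> \<forall>t\<in>{a..b}. U t \<le> K + M / 2"
  shows "\<forall>t\<in>{a..b}. U t \<le> 2 * K"
proof -
  obtain x where "x \<in> {a..b}" and max: "\<forall>t\<in>{a..b}. U t \<le> U x"
    using continuous_attains_sup[of "{a..b}" U] assms by auto
  then have "U x \<le> K + U x / 2" using improve[OF max] by blast
  then show ?thesis using max by fastforce
qed

section \<open>The half-angle substitution\<close>

lemma cos_half_pos: "0 \<le> t \<Longrightarrow> t < pi \<Longrightarrow> 0 < cos (t / 2)"
  by (intro cos_gt_zero_pi) auto

definition tan_half_angle :: "real \<Rightarrow> real" where
  "tan_half_angle t = tan (t / 2)"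

lemma tan_half_angle_0 [simp]: "tan_half_angle 0 = 0"
  by (simp add: tan_half_angle_def)

lemma tan_half_angle_pos: "0 < t \<Longrightarrow> t < pi \<Longrightarrow> 0 < tan_half_angle t"
  by (simp add: tan_half_angle_def tan_gt_zero)

lemma tan_half_angle_mono: "0 \<le> t \<Longrightarrow> t \<le> u \<Longrightarrow> u < pi \<Longrightarrow> tan_half_angle t \<le> tan_half_angle u"
  by (simp add: tan_half_angle_def tan_mono_le)

lemma tan_half_angle_le_one: "0 \<le> t \<Longrightarrow> t \<le> pi / 2 \<Longrightarrow> tan_half_angle t \<le> 1"
  using tan_half_angle_mono[of t "pi / 2"] by (simp add: tan_half_angle_def tan_45)

lemma sin_eq_tan_half_angle: "sin t = 2 * tan_half_angle t / (1 + (tan_half_angle t)\<^sup>2)"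
  using sin_tan_half[of "t / 2"] by (simp add: tan_half_angle_def)

lemma sin_le_two_tan_half_angle: "0 < t \<Longrightarrow> t < pi \<Longrightarrow> sin t \<le> 2 * tan_half_angle t"
  using tan_half_angle_pos[of t] sin_eq_tan_half_angle[of t]
  by (simp add: divide_le_eq add_pos_nonneg mult_le_cancel_left1)

lemma tan_half_angle_le_sin: "0 < t \<Longrightarrow> t \<le> pi / 2 \<Longrightarrow> tan_half_angle t \<le> sin t"
proof -
  assume t: "0 < t" "t \<le> pi / 2"
  define T where "T = tan_half_angle t"
  have "0 < T" "T \<le> 1" using t tan_half_angle_pos tan_half_angle_le_one by (auto simp: T_def)
  then have "T * (1 + T\<^sup>2) \<le> 2 * T" by (simp add: power_le_one)
  then show ?thesis
    using sin_eq_tan_half_angle[of t] by (simp add: T_def le_divide_eq add_pos_nonneg)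
qed

lemma tan_half_angle_has_real_derivative:
  assumes "0 < t" "t < pi"
  shows "(tan_half_angle has_real_derivative tan_half_angle t / sin t) (at t)"
proof -
  have cos: "cos (t / 2) \<noteq> 0" using cos_half_pos[of t] assms by simp
  have "((\<lambda>t. tan (t / 2)) has_real_derivative inverse ((cos (t / 2))\<^sup>2) * (1 / 2)) (at t)"
    using cos by (auto intro!: derivative_eq_intros DERIV_tan[THEN DERIV_chain2])
  moreover have "inverse ((cos (t / 2))\<^sup>2) * (1 / 2) = tan_half_angle t / sin t"
    using tan_sec[OF cos] sin_eq_tan_half_angle[of t] tan_half_angle_pos[OF assms]
    by (simp add: tan_half_angle_def power_inverse)
  ultimately show ?thesis unfolding tan_half_angle_def[abs_def] by simp
qed

lemma tan_half_angle_powr_has_real_derivative: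
  assumes "0 < t" "t < pi"
  shows "((\<lambda>t. tan_half_angle t powr e) has_real_derivative e * tan_half_angle t powr e / sin t) (at t)"
  using DERIV_powr[OF tan_half_angle_has_real_derivative[OF assms] tan_half_angle_pos[OF assms]
      DERIV_const[of e]] tan_half_angle_pos[OF assms]
  by (simp add: mult.commute)

lemma ln_tan_half_angle_has_real_derivative:
  assumes "0 < t" "t < pi"
  shows "((\<lambda>t. ln (tan_half_angle t)) has_real_derivative 1 / sin t) (at t)"
  using DERIV_chain2[OF DERIV_ln[OF tan_half_angle_pos[OF assms]]
      tan_half_angle_has_real_derivative[OF assms]] tan_half_angle_pos[OF assms]
  by simp

lemma continuous_on_tan_half_angle: "continuous_on {0..<pi} tan_half_angle"
  unfolding tan_half_angle_def[abs_def]
  by (intro continuous_intros) (auto dest!: cos_half_pos)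

section \<open>The Legendre equation as a first-order system\<close>

definition legendre_system :: "real \<Rightarrow> complex \<Rightarrow> (real \<Rightarrow> complex) \<Rightarrow> (real \<Rightarrow> complex) \<Rightarrow> bool" where
  "legendre_system m lam y z \<longleftrightarrow> (\<forall>t\<in>{0<..<pi}.
     (y has_vector_derivative z t / of_real (sin t)) (at t) \<and>
     (z has_vector_derivative (lam * of_real (sin t) + of_real (m\<^sup>2 / sin t)) * y t) (at t))"

lemma sin_pos_in_open_interval: "t \<in> {0<..<pi} \<Longrightarrow> 0 < sin t"
  by (auto intro: sin_gt_zero)

lemma legendre_sol_iff_system:
  "legendre_sol n chi y \<longleftrightarrow> (\<exists>z. legendre_system \<bar>n\<bar> (chi - of_real (n * (n + 1))) y z)"
proof -
  have coeff: "chi * of_real (sin t) - of_real (n * (n + 1) * sin t - n\<^sup>2 / sin t)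
      = (chi - of_real (n * (n + 1))) * of_real (sin t) + of_real (\<bar>n\<bar>\<^sup>2 / sin t)" for t
    by (simp add: algebra_simps)
  have sin_nz: "of_real (sin t) \<noteq> (0 :: complex)" if "t \<in> {0<..<pi}" for t
    using sin_pos_in_open_interval[OF that] by simp
  show ?thesis
  proof
    assume "legendre_sol n chi y"
    then obtain y' where y': "\<forall>t\<in>{0<..<pi}. (y has_vector_derivative y' t) (at t) \<and>
        ((\<lambda>s. of_real (sin s) * y' s) has_vector_derivative
           (chi * of_real (sin t) - of_real (n * (n + 1) * sin t - n\<^sup>2 / sin t)) * y t) (at t)"
      unfolding legendre_sol_def by blast
    have "legendre_system \<bar>n\<bar> (chi - of_real (n * (n + 1))) y (\<lambda>s. of_real (sin s) * y' s)"
      unfolding legendre_system_def coeff[symmetric] using y' sin_nz by simp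
    then show "\<exists>z. legendre_system \<bar>n\<bar> (chi - of_real (n * (n + 1))) y z" by blast
  next
    assume "\<exists>z. legendre_system \<bar>n\<bar> (chi - of_real (n * (n + 1))) y z"
    then obtain z where z: "legendre_system \<bar>n\<bar> (chi - of_real (n * (n + 1))) y z" ..
    show "legendre_sol n chi y"
      unfolding legendre_sol_def
    proof (intro exI ballI conjI)
      fix t :: real assume t: "t \<in> {0<..<pi}"
      show "(y has_vector_derivative z t / of_real (sin t)) (at t)"
        using z t by (simp add: legendre_system_def)
      show "((\<lambda>s. of_real (sin s) * (z s / of_real (sin s))) has_vector_derivative
          (chi * of_real (sin t) - of_real (n * (n + 1) * sin t - n\<^sup>2 / sin t)) * y t) (at t)"
        unfolding coeff
        by (rule has_vector_derivative_transform_within_open[of z _ t "{0<..<pi}"])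
          (use z t sin_nz in \<open>auto simp: legendre_system_def\<close>)
    qed
  qed
qed

lemma legendre_system_continuous_on:
  assumes "legendre_system m lam y z" "S \<subseteq> {0<..<pi}"
  shows "continuous_on S y"
  using assms unfolding legendre_system_def
  by (auto intro!: continuous_at_imp_continuous_on intro: has_vector_derivative_continuous)

lemma legendre_system_reflect:
  assumes "legendre_system m lam y z"
  shows "legendre_system m lam (\<lambda>t. y (pi - t)) (\<lambda>t. - z (pi - t))"
  unfolding legendre_system_def
proof
  fix t :: real assume "t \<in> {0<..<pi}"
  then have "pi - t \<in> {0<..<pi}" by auto
  note at_reflection = assms[unfolded legendre_system_def, rule_format, OF this]
  have dy: "(y has_vector_derivative z (pi - t) / of_real (sin t)) (at (pi - t))"
    and dz: "(z has_vector_derivative (lam * of_real (sin t) + of_real (m\<^sup>2 / sin t)) * y (pi - t)) (at (pi - t))"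
    using at_reflection by simp_all
  have reflect: "((\<lambda>t. pi - t) has_vector_derivative - 1) (at t)"
    by (auto intro!: derivative_eq_intros)
  show "((\<lambda>t. y (pi - t)) has_vector_derivative - z (pi - t) / of_real (sin t)) (at t) \<and>
      ((\<lambda>t. - z (pi - t)) has_vector_derivative
        (lam * of_real (sin t) + of_real (m\<^sup>2 / sin t)) * y (pi - t)) (at t)"
    using vector_diff_chain_at[OF reflect dy] has_vector_derivative_minus[OF vector_diff_chain_at[OF reflect dz]]
    by (simp add: o_def)
qed

lemma legendre_system_lincomb:
  assumes "legendre_system m lam y1 z1" "legendre_system m lam y2 z2"
  shows "legendre_system m lam (\<lambda>t. a * y1 t + b * y2 t) (\<lambda>t. a * z1 t + b * z2 t)"
  using assms unfolding legendre_system_def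
  by (auto intro!: derivative_eq_intros simp: algebra_simps add_divide_distrib)

lemma legendre_system_wronskian_constant:
  assumes "legendre_system m lam y1 z1" "legendre_system m lam y2 z2"
  shows "\<exists>w. \<forall>t\<in>{0<..<pi}. y1 t * z2 t - z1 t * y2 t = w"
proof (rule has_derivative_zero_constant)
  fix t :: real assume "t \<in> {0<..<pi}"
  with assms have "((\<lambda>t. y1 t * z2 t - z1 t * y2 t) has_vector_derivative 0) (at t)"
    unfolding legendre_system_def by (auto intro!: derivative_eq_intros simp: algebra_simps)
  then show "((\<lambda>t. y1 t * z2 t - z1 t * y2 t) has_derivative (\<lambda>h. 0)) (at t within {0<..<pi})"
    by (simp add: has_vector_derivative_def has_derivative_at_withinI)
qed simp

section \<open>Square integrability near an endpoint\<close>

lemma L2_sin_0_if_norm_le_tan_half_angle_powr: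
  assumes c: "0 < c" "c < pi" and "mu < 1"
    and cont: "continuous_on {0<..<c} y"
    and bound: "\<And>t. 0 < t \<Longrightarrow> t < c \<Longrightarrow> norm (y t) \<le> C * tan_half_angle t powr (- mu)"
  shows "L2_sin y 0 c"
proof -
  define e where "e = 2 - 2 * mu"
  have "0 < e" using \<open>mu < 1\<close> by (simp add: e_def)
  define g where "g t = 4 * C\<^sup>2 * tan_half_angle t powr e / sin t" for t
  have "(g has_integral (4 * C\<^sup>2 / e * tan_half_angle c powr e - 4 * C\<^sup>2 / e * tan_half_angle 0 powr e)) {0..c}"
  proof (rule fundamental_theorem_of_calculus_interior)
    have "continuous_on {0..c} tan_half_angle"
      using continuous_on_tan_half_angle by (rule continuous_on_subset) (use c in auto)
    then show "continuous_on {0..c} (\<lambda>t. 4 * C\<^sup>2 / e * tan_half_angle t powr e)"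
      using \<open>0 < e\<close> tan_half_angle_pos c
      by (intro continuous_intros continuous_on_powr') (auto simp: le_less)
    fix t assume "t \<in> {0<..<c}"
    then have "((\<lambda>t. 4 * C\<^sup>2 / e * tan_half_angle t powr e) has_real_derivative g t) (at t)"
      using DERIV_cmult[where c = "4 * C\<^sup>2 / e", OF tan_half_angle_powr_has_real_derivative[of t e]]
        c \<open>0 < e\<close>
      by (simp add: g_def mult.assoc)
    then show "((\<lambda>t. 4 * C\<^sup>2 / e * tan_half_angle t powr e) has_vector_derivative g t) (at t)"
      by (simp add: has_real_derivative_iff_has_vector_derivative)
  qed (use c in simp)
  then have "g integrable_on {0<..<c}"
    by (simp add: integrable_on_open_interval_real has_integral_integrable)
  have "(\<lambda>t. (cmod (y t))\<^sup>2 * sin t) \<in> borel_measurable (lebesgue_on {0<..<c})"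
    by (intro continuous_imp_measurable_on_sets_lebesgue continuous_intros cont) auto
  then show ?thesis
    unfolding L2_sin_def
  proof (rule measurable_bounded_by_integrable_imp_integrable[OF _ \<open>g integrable_on {0<..<c}\<close>])
    fix t assume "t \<in> {0<..<c}"
    then have t: "0 < t" "t < pi" using c by auto
    define T where "T = tan_half_angle t"
    have "0 < T" "0 < sin t" "sin t \<le> 2 * T"
      using t tan_half_angle_pos sin_le_two_tan_half_angle sin_gt_zero by (auto simp: T_def)
    have "(norm (y t))\<^sup>2 \<le> (C * T powr (- mu))\<^sup>2"
      using bound \<open>t \<in> {0<..<c}\<close> by (intro power_mono) (auto simp: T_def)
    also have "\<dots> = C\<^sup>2 * T powr (- 2 * mu)"
      by (simp add: power_mult_distrib power2_eq_square flip: powr_add)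
    finally have "(norm (y t))\<^sup>2 * sin t \<le> C\<^sup>2 * T powr (- 2 * mu) * sin t"
      using \<open>0 < sin t\<close> by (intro mult_right_mono) auto
    also have "\<dots> \<le> C\<^sup>2 * T powr (- 2 * mu) * (4 * T\<^sup>2 / sin t)"
    proof -
      have "sin t * sin t \<le> 2 * T * (2 * T)"
        using \<open>0 < sin t\<close> \<open>sin t \<le> 2 * T\<close> by (intro mult_mono) auto
      then have "sin t \<le> 4 * T\<^sup>2 / sin t"
        using \<open>0 < sin t\<close> by (simp add: le_divide_eq power2_eq_square)
      then show ?thesis by (intro mult_left_mono) auto
    qed
    also have "\<dots> = g t"
    proof -
      have "T powr e = T powr (- 2 * mu) * T\<^sup>2"
        using powr_add[of T "- 2 * mu" 2] \<open>0 < T\<close> by (simp add: e_def)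
      then show ?thesis by (simp add: g_def T_def)
    qed
    finally show "norm ((cmod (y t))\<^sup>2 * sin t) \<le> g t"
      using \<open>0 < sin t\<close> by simp
  qed simp
qed

lemma has_integral_inverse_sin:
  assumes "0 < a" "a \<le> b" "b < pi"
  shows "((\<lambda>t. 1 / sin t) has_integral (ln (tan_half_angle b) - ln (tan_half_angle a))) {a..b}"
proof (rule fundamental_theorem_of_calculus[OF \<open>a \<le> b\<close>])
  fix t assume "t \<in> {a..b}"
  then have "((\<lambda>t. ln (tan_half_angle t)) has_real_derivative 1 / sin t) (at t)"
    using assms by (intro ln_tan_half_angle_has_real_derivative) auto
  then show "((\<lambda>t. ln (tan_half_angle t)) has_vector_derivative 1 / sin t) (at t within {a..b})"
    by (simp add: has_real_derivative_iff_has_vector_derivative has_vector_derivative_at_within)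
qed

lemma tan_half_angle_double_arctan: "tan_half_angle (2 * arctan x) = x"
  by (simp add: tan_half_angle_def tan_arctan)

lemma not_L2_sin_0_if_norm_ge_tan_half_angle_powr:
  assumes "1 \<le> m" "0 < d" "d \<le> pi / 2" "0 < delta"
    and bound: "\<And>t. 0 < t \<Longrightarrow> t \<le> d \<Longrightarrow> delta \<le> norm (y t) * tan_half_angle t powr m"
  shows "\<not> L2_sin y 0 d"
proof
  define f where "f t = (cmod (y t))\<^sup>2 * sin t" for t
  assume "L2_sin y 0 d"
  then have f: "f integrable_on {0..d}"
    by (simp add: L2_sin_def f_def[abs_def] integrable_on_open_interval_real)
  have f_ge: "delta\<^sup>2 * (1 / sin t) \<le> f t" if t: "0 < t" "t \<le> d" for t
  proof -
    define T where "T = tan_half_angle t"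
    have "0 < T" "T \<le> 1" "T \<le> sin t"
      using t \<open>d \<le> pi / 2\<close> tan_half_angle_pos tan_half_angle_le_one tan_half_angle_le_sin
      by (auto simp: T_def)
    have "delta\<^sup>2 \<le> (norm (y t) * T powr m)\<^sup>2"
      using bound[OF t] \<open>0 < delta\<close> by (intro power_mono) (auto simp: T_def)
    also have "\<dots> \<le> (norm (y t) * T)\<^sup>2"
      using \<open>0 < T\<close> \<open>T \<le> 1\<close> \<open>1 \<le> m\<close> powr_mono'[of 1 m T]
      by (intro power_mono mult_left_mono) auto
    also have "\<dots> \<le> (norm (y t) * sin t)\<^sup>2"
      using \<open>0 < T\<close> \<open>T \<le> sin t\<close> by (intro power_mono mult_left_mono) auto
    finally show ?thesis
      using \<open>0 < T\<close> \<open>T \<le> sin t\<close> by (simp add: f_def divide_le_eq power2_eq_square mult_ac)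
  qed
  define I where "I = integral {0..d} f"
  have ln_bound: "delta\<^sup>2 * (ln (tan_half_angle d) - ln (tan_half_angle e)) \<le> I" if "0 < e" "e < d" for e
  proof -
    have "delta\<^sup>2 * (ln (tan_half_angle d) - ln (tan_half_angle e)) \<le> integral {e..d} f"
      using has_integral_cmul[OF has_integral_inverse_sin, of e d "delta\<^sup>2"] that \<open>d \<le> pi / 2\<close> f_ge
      by (intro has_integral_le[OF _ integrable_integral[OF integrable_on_subinterval[OF f]]]) auto
    also have "\<dots> \<le> I"
      unfolding I_def using that f \<open>d \<le> pi / 2\<close>
      by (intro integral_subset_le integrable_on_subinterval)
        (auto simp: f_def intro!: mult_nonneg_nonneg sin_ge_zero)
    finally show ?thesis .
  qed
  define e where "e = 2 * arctan (tan_half_angle d * exp (- ((\<bar>I\<bar> + 1) / delta\<^sup>2)))"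
  have "0 < tan_half_angle d" using tan_half_angle_pos \<open>0 < d\<close> \<open>d \<le> pi / 2\<close> by simp
  moreover have "0 < (\<bar>I\<bar> + 1) / delta\<^sup>2"
    using \<open>0 < delta\<close> by (simp add: add_pos_nonneg)
  ultimately have "0 < e" "tan_half_angle e < tan_half_angle d"
    by (simp_all add: e_def tan_half_angle_double_arctan)
  moreover have "e < pi"
    using arctan_ubound[of "tan_half_angle d * exp (- ((\<bar>I\<bar> + 1) / delta\<^sup>2))"] by (simp add: e_def)
  ultimately have "e < d"
    using tan_half_angle_mono[of d e] \<open>0 < d\<close> by (auto simp: not_le[symmetric])
  with ln_bound[OF \<open>0 < e\<close>] have "\<bar>I\<bar> + 1 \<le> I"
    using \<open>0 < tan_half_angle d\<close> \<open>0 < delta\<close> by (simp add: e_def tan_half_angle_double_arctan ln_mult)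
  then show False by simp
qed

lemma L2_sin_subinterval: "L2_sin y a b \<Longrightarrow> a \<le> a' \<Longrightarrow> b' \<le> b \<Longrightarrow> L2_sin y a' b'"
  unfolding L2_sin_def integrable_on_open_interval_real
  by (erule integrable_on_subinterval) auto

lemma L2_sin_reflect:
  assumes "L2_sin (\<lambda>t. y (pi - t)) 0 c" "0 < c"
  shows "L2_sin y (pi - c) pi"
proof -
  define h where "h t = (cmod (y (pi - t)))\<^sup>2 * sin t" for t
  have "h integrable_on {0..c}"
    using assms(1) unfolding L2_sin_def h_def[abs_def] by (simp add: integrable_on_open_interval_real)
  then have "(\<lambda>x. h ((-1) *\<^sub>R x + pi)) integrable_on ((\<lambda>x. (1 / (-1)) *\<^sub>R x + - ((1 / (-1)) *\<^sub>R pi)) ` cbox 0 c)"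
    by (intro integrable_affinity) auto
  moreover have "(\<lambda>x. h ((-1) *\<^sub>R x + pi)) = (\<lambda>t. (cmod (y t))\<^sup>2 * sin t)"
    by (simp add: h_def fun_eq_iff)
  moreover have "(\<lambda>x. (1 / (-1)) *\<^sub>R x + - ((1 / (-1)) *\<^sub>R pi)) ` cbox 0 c = {pi - c..pi}"
    using image_affinity_atLeastAtMost[of "-1" pi 0 c] assms(2) by simp
  ultimately show ?thesis unfolding L2_sin_def by (simp add: integrable_on_open_interval_real)
qed

section \<open>An energy estimate: square integrability for m < 1\<close>

lemma has_real_derivative_norm_power2:
  fixes y :: "real \<Rightarrow> 'a::real_inner"
  assumes "(y has_vector_derivative y') (at t)"
  shows "((\<lambda>t. (norm (y t))\<^sup>2) has_real_derivative 2 * inner (y t) y') (at t)"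
proof -
  have "((\<lambda>t. inner (y t) (y t)) has_derivative (\<lambda>h. inner (y t) (h *\<^sub>R y') + inner (h *\<^sub>R y') (y t))) (at t)"
    using has_derivative_inner[OF assms[unfolded has_vector_derivative_def]
        assms[unfolded has_vector_derivative_def]] .
  then show ?thesis
    by (simp add: has_real_derivative_iff_has_vector_derivative has_vector_derivative_def
        power2_norm_eq_inner inner_commute algebra_simps)
qed

lemma inner_ge_minus_norm_mult: "- (norm x * norm y) \<le> inner x y"
  using Cauchy_Schwarz_ineq2[of x y] by linarith

lemma energy_rate_nonneg:
  fixes mu s P Y Z a b :: real
  assumes "0 < mu" "0 < s" "0 \<le> P" and a: "- (Y * Z / s) \<le> a" and b: "- (mu\<^sup>2 * (Y * Z / s)) \<le> b"
  shows "0 \<le> 2 * mu * P / s * (mu\<^sup>2 * Y\<^sup>2 + Z\<^sup>2) + P * (mu\<^sup>2 * (2 * a) + 2 * b)"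
proof -
  have "- (mu\<^sup>2 * (Y * Z / s)) \<le> mu\<^sup>2 * a"
    using mult_left_mono[OF a, of "mu\<^sup>2"] by simp
  with b have "- (4 * (mu\<^sup>2 * (Y * Z / s))) \<le> mu\<^sup>2 * (2 * a) + 2 * b"
    unfolding mult.left_commute[of "mu\<^sup>2" 2] by argo
  then have "P * (- (4 * (mu\<^sup>2 * (Y * Z / s)))) \<le> P * (mu\<^sup>2 * (2 * a) + 2 * b)"
    using \<open>0 \<le> P\<close> by (rule mult_left_mono)
  moreover have "2 * mu * P / s * (mu * Y - Z)\<^sup>2
      = 2 * mu * P / s * (mu\<^sup>2 * Y\<^sup>2 + Z\<^sup>2) + P * (- (4 * (mu\<^sup>2 * (Y * Z / s))))"
    using \<open>0 < s\<close> by (simp add: power2_eq_square field_simps)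
  moreover have "0 \<le> 2 * mu * P / s * (mu * Y - Z)\<^sup>2"
    using assms by simp
  ultimately show ?thesis by linarith
qed

text \<open>In the variable s = ln (tan_half_angle t) the system reads y_s = z, z_s = (m^2 + lam sin^2 t) y;
  while the potential stays below mu^2, the energy exp (2 mu s) (mu^2 |y|^2 + |z|^2) cannot decrease.\<close>
lemma legendre_system_energy_mono:
  assumes sys: "legendre_system m lam y z" and "0 < mu" "0 < a" "a \<le> b" "b < pi"
    and small: "\<And>t. t \<in> {a..b} \<Longrightarrow> m\<^sup>2 + norm lam * (sin t)\<^sup>2 \<le> mu\<^sup>2"
  shows "tan_half_angle a powr (2 * mu) * (mu\<^sup>2 * (norm (y a))\<^sup>2 + (norm (z a))\<^sup>2)
       \<le> tan_half_angle b powr (2 * mu) * (mu\<^sup>2 * (norm (y b))\<^sup>2 + (norm (z b))\<^sup>2)"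
proof (rule DERIV_nonneg_imp_nondecreasing[OF \<open>a \<le> b\<close>])
  fix t assume t: "a \<le> t" "t \<le> b"
  then have t_in: "t \<in> {0<..<pi}" using assms by auto
  define s where "s = sin t"
  define w where "w = (lam * of_real s + of_real (m\<^sup>2 / s)) * y t"
  define P where "P = tan_half_angle t powr (2 * mu)"
  have "0 < s" using t_in by (simp add: s_def sin_pos_in_open_interval)
  have dy: "(y has_vector_derivative z t / of_real s) (at t)"
    and dz: "(z has_vector_derivative w) (at t)"
    using sys t_in by (auto simp: legendre_system_def s_def w_def)
  have "((\<lambda>t. tan_half_angle t powr (2 * mu)) has_real_derivative 2 * mu * P / s) (at t)"
    using tan_half_angle_powr_has_real_derivative t_in by (simp add: P_def s_def)
  from DERIV_mult[OF this DERIV_add[OF DERIV_cmult[where c = "mu\<^sup>2", OF has_real_derivative_norm_power2[OF dy]]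
        has_real_derivative_norm_power2[OF dz]]]
  have "((\<lambda>t. tan_half_angle t powr (2 * mu) * (mu\<^sup>2 * (norm (y t))\<^sup>2 + (norm (z t))\<^sup>2))
      has_real_derivative 2 * mu * P / s * (mu\<^sup>2 * (norm (y t))\<^sup>2 + (norm (z t))\<^sup>2)
        + P * (mu\<^sup>2 * (2 * inner (y t) (z t / of_real s)) + 2 * inner (z t) w)) (at t)"
    by (simp add: P_def ac_simps)
  moreover have "0 \<le> 2 * mu * P / s * (mu\<^sup>2 * (norm (y t))\<^sup>2 + (norm (z t))\<^sup>2)
        + P * (mu\<^sup>2 * (2 * inner (y t) (z t / of_real s)) + 2 * inner (z t) w)"
  proof (rule energy_rate_nonneg[OF \<open>0 < mu\<close> \<open>0 < s\<close>])
    have "norm (lam * of_real s + of_real (m\<^sup>2 / s)) \<le> norm lam * s + m\<^sup>2 / s"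
      using \<open>0 < s\<close> norm_triangle_ineq[of "lam * of_real s" "of_real (m\<^sup>2 / s)"]
      by (simp add: norm_mult norm_divide norm_power)
    also have "\<dots> = (m\<^sup>2 + norm lam * s\<^sup>2) / s"
      using \<open>0 < s\<close> by (simp add: field_simps power2_eq_square)
    also have "\<dots> \<le> mu\<^sup>2 / s"
      using small t \<open>0 < s\<close> by (simp add: s_def divide_right_mono)
    finally have "norm w \<le> mu\<^sup>2 / s * norm (y t)"
      unfolding w_def norm_mult by (rule mult_right_mono) simp
    then show "- (mu\<^sup>2 * (norm (y t) * norm (z t) / s)) \<le> inner (z t) w"
      using inner_ge_minus_norm_mult[of "z t" w] mult_left_mono[of "norm w" "mu\<^sup>2 / s * norm (y t)" "norm (z t)"]
      by (simp add: algebra_simps)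
    show "- (norm (y t) * norm (z t) / s) \<le> inner (y t) (z t / of_real s)"
      using inner_ge_minus_norm_mult[of "y t" "z t / of_real s"] \<open>0 < s\<close> by (simp add: norm_divide)
  qed (simp add: P_def)
  ultimately show "\<exists>D. ((\<lambda>t. tan_half_angle t powr (2 * mu) * (mu\<^sup>2 * (norm (y t))\<^sup>2 + (norm (z t))\<^sup>2))
      has_real_derivative D) (at t) \<and> 0 \<le> D"
    by blast
qed

lemma legendre_system_L2_sin_at_0:
  assumes sys: "legendre_system m lam y z" and "\<bar>m\<bar> < 1"
  shows "\<exists>c\<in>{0<..<pi}. L2_sin y 0 c"
proof -
  define mu where "mu = (1 + \<bar>m\<bar>) / 2"
  have "0 < mu" "mu < 1" "\<bar>m\<bar> < mu"
    using \<open>\<bar>m\<bar> < 1\<close> by (auto simp: mu_def)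
  then have "m\<^sup>2 < mu\<^sup>2"
    using power_strict_mono[of "\<bar>m\<bar>" mu 2] by simp
  define c where "c = min 1 ((mu\<^sup>2 - m\<^sup>2) / (norm lam + 1))"
  have "0 < c" "c < pi"
    using \<open>m\<^sup>2 < mu\<^sup>2\<close> pi_gt3 by (auto simp: c_def intro!: divide_pos_pos add_nonneg_pos)
  have small: "m\<^sup>2 + norm lam * (sin t)\<^sup>2 \<le> mu\<^sup>2" if "0 \<le> t" "t \<le> c" for t
  proof -
    have "0 \<le> sin t" using that \<open>c < pi\<close> by (intro sin_ge_zero) auto
    then have "(sin t)\<^sup>2 \<le> sin t"
      using mult_right_mono[OF sin_le_one[of t], of "sin t"] by (simp add: power2_eq_square)
    then have "(sin t)\<^sup>2 \<le> t"
      using sin_x_le_x[OF \<open>0 \<le> t\<close>] by linarith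
    then have "norm lam * (sin t)\<^sup>2 \<le> norm lam * ((mu\<^sup>2 - m\<^sup>2) / (norm lam + 1))"
      using that by (intro mult_left_mono) (auto simp: c_def)
    also have "\<dots> = (mu\<^sup>2 - m\<^sup>2) * (norm lam / (norm lam + 1))"
      by simp
    also have "\<dots> \<le> (mu\<^sup>2 - m\<^sup>2) * 1"
      using \<open>m\<^sup>2 < mu\<^sup>2\<close> pos_divide_le_eq[of "norm lam + 1" "norm lam" 1]
      by (intro mult_left_mono) (auto simp: add_nonneg_pos)
    finally show ?thesis by simp
  qed
  define K where "K = tan_half_angle c powr (2 * mu) * (mu\<^sup>2 * (norm (y c))\<^sup>2 + (norm (z c))\<^sup>2)"
  have bound: "norm (y t) \<le> sqrt K / mu * tan_half_angle t powr (- mu)" if t: "0 < t" "t < c" for t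
  proof -
    have "0 < tan_half_angle t" using t \<open>c < pi\<close> by (simp add: tan_half_angle_pos)
    have "(mu * tan_half_angle t powr mu * norm (y t))\<^sup>2
        = tan_half_angle t powr (2 * mu) * (mu\<^sup>2 * (norm (y t))\<^sup>2)"
      by (simp add: power_mult_distrib power2_eq_square flip: powr_add)
    also have "\<dots> \<le> tan_half_angle t powr (2 * mu) * (mu\<^sup>2 * (norm (y t))\<^sup>2 + (norm (z t))\<^sup>2)"
      by (intro mult_left_mono) auto
    also have "\<dots> \<le> K"
      unfolding K_def using t \<open>c < pi\<close> \<open>0 < mu\<close> small
      by (intro legendre_system_energy_mono[OF sys]) auto
    finally have "mu * tan_half_angle t powr mu * norm (y t) \<le> sqrt K"
      by (rule real_le_rsqrt)
    then show ?thesis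
      using \<open>0 < mu\<close> \<open>0 < tan_half_angle t\<close> by (simp add: powr_minus field_simps)
  qed
  have "L2_sin y 0 c"
    using \<open>c < pi\<close>
    by (intro L2_sin_0_if_norm_le_tan_half_angle_powr[OF \<open>0 < c\<close> \<open>c < pi\<close> \<open>mu < 1\<close>
          legendre_system_continuous_on[OF sys] bound]) auto
  then show ?thesis using \<open>0 < c\<close> \<open>c < pi\<close> by auto
qed

section \<open>Variation of constants: a lower bound for m > 0\<close>

text \<open>Variation of constants around T^m and T^(-m) (T = tan_half_angle), the solutions for lam = 0:
  y = T^m small_coeff + T^(-m) large_coeff.\<close>
definition small_coeff :: "real \<Rightarrow> (real \<Rightarrow> complex) \<Rightarrow> (real \<Rightarrow> complex) \<Rightarrow> real \<Rightarrow> complex" where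
  "small_coeff m y z t = of_real (tan_half_angle t powr (- m)) * (of_real m * y t + z t) / (2 * of_real m)"

definition large_coeff :: "real \<Rightarrow> (real \<Rightarrow> complex) \<Rightarrow> (real \<Rightarrow> complex) \<Rightarrow> real \<Rightarrow> complex" where
  "large_coeff m y z t = of_real (tan_half_angle t powr m) * (of_real m * y t - z t) / (2 * of_real m)"

lemma small_large_coeff_recombine:
  assumes "0 < m" "0 < t" "t < pi"
  shows "of_real (tan_half_angle t powr m) * y t
    = of_real (tan_half_angle t powr (2 * m)) * small_coeff m y z t + large_coeff m y z t"
proof -
  have "tan_half_angle t powr (2 * m) * tan_half_angle t powr (- m) = tan_half_angle t powr m"
    by (simp flip: powr_add)
  then have "(of_real (tan_half_angle t powr (2 * m)) :: complex) * of_real (tan_half_angle t powr (- m))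
      = of_real (tan_half_angle t powr m)"
    by (metis of_real_mult)
  then show ?thesis
    using \<open>0 < m\<close> by (simp add: small_coeff_def large_coeff_def field_simps)
qed

context
  fixes m :: real and lam :: complex and y z :: "real \<Rightarrow> complex"
  assumes sys: "legendre_system m lam y z" and "0 < m"
begin

lemma
  assumes t: "t \<in> {0<..<pi}"
  shows small_coeff_has_vector_derivative: "(small_coeff m y z has_vector_derivative
      lam / (2 * of_real m) * of_real (sin t * tan_half_angle t powr (- m)) * y t) (at t)"
    and large_coeff_has_vector_derivative: "(large_coeff m y z has_vector_derivative
      - lam / (2 * of_real m) * of_real (sin t * tan_half_angle t powr m) * y t) (at t)"
proof -
  define s where "s = sin t"
  have "0 < s" using t by (simp add: s_def sin_pos_in_open_interval)
  have dy: "(y has_vector_derivative z t / of_real s) (at t)"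
    and dz: "(z has_vector_derivative (lam * of_real s + of_real (m\<^sup>2 / s)) * y t) (at t)"
    using sys t by (auto simp: legendre_system_def s_def)
  have dT: "((\<lambda>t. of_real (tan_half_angle t powr e)) has_vector_derivative
      of_real (e * tan_half_angle t powr e / s)) (at t)" for e
    using t by (auto simp: s_def intro!: has_vector_derivative_of_real tan_half_angle_powr_has_real_derivative)
  have "(small_coeff m y z has_vector_derivative
      (of_real (tan_half_angle t powr (- m))
          * (of_real m * (z t / of_real s) + (lam * of_real s + of_real (m\<^sup>2 / s)) * y t)
        + of_real (- m * tan_half_angle t powr (- m) / s) * (of_real m * y t + z t))
      / (2 * of_real m)) (at t)"
    unfolding small_coeff_def[abs_def]
    by (rule has_vector_derivative_divide[OF has_vector_derivative_mult[OF dT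
          has_vector_derivative_add[OF has_vector_derivative_mult_right[OF dy] dz]]])
  then show "(small_coeff m y z has_vector_derivative
      lam / (2 * of_real m) * of_real (sin t * tan_half_angle t powr (- m)) * y t) (at t)"
    using \<open>0 < s\<close> \<open>0 < m\<close> by (simp add: s_def field_simps power2_eq_square)
  have "(large_coeff m y z has_vector_derivative
      (of_real (tan_half_angle t powr m)
          * (of_real m * (z t / of_real s) - (lam * of_real s + of_real (m\<^sup>2 / s)) * y t)
        + of_real (m * tan_half_angle t powr m / s) * (of_real m * y t - z t))
      / (2 * of_real m)) (at t)"
    unfolding large_coeff_def[abs_def]
    by (rule has_vector_derivative_divide[OF has_vector_derivative_mult[OF dT
          has_vector_derivative_diff[OF has_vector_derivative_mult_right[OF dy] dz]]])
  then show "(large_coeff m y z has_vector_derivative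
      - lam / (2 * of_real m) * of_real (sin t * tan_half_angle t powr m) * y t) (at t)"
    using \<open>0 < s\<close> \<open>0 < m\<close> by (simp add: s_def field_simps power2_eq_square)
qed

lemma norm_lam_coeff_mult:
  "norm (lam / (2 * of_real m) * of_real r * y v) = norm lam / (2 * m) * \<bar>r\<bar> * norm (y v)"
  using \<open>0 < m\<close> by (simp add: norm_mult norm_divide)

lemma large_coeff_increment_le:
  assumes "0 < u" "u \<le> c" "c < pi"
    and bound: "\<And>v. v \<in> {u..c} \<Longrightarrow> norm (y v) * tan_half_angle v powr m \<le> M"
  shows "norm (large_coeff m y z c - large_coeff m y z u) \<le> norm lam / (2 * m) * M * c"
proof -
  define k where "k = norm lam / (2 * m)"
  have "0 \<le> k" using \<open>0 < m\<close> by (simp add: k_def)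
  have "0 \<le> norm (y u) * tan_half_angle u powr m" by simp
  also have "\<dots> \<le> M" using bound \<open>u \<le> c\<close> by simp
  finally have "0 \<le> M" .
  have "norm (large_coeff m y z c - large_coeff m y z u) \<le> k * M * c - k * M * u"
  proof (rule norm_increment_le_of_derivative_bound[OF \<open>u \<le> c\<close>])
    fix v assume v: "v \<in> {u..c}"
    then have "v \<in> {0<..<pi}" using assms by auto
    then show "(large_coeff m y z has_vector_derivative
        - lam / (2 * of_real m) * of_real (sin v * tan_half_angle v powr m) * y v) (at v)"
      by (rule large_coeff_has_vector_derivative)
    show "((\<lambda>v. k * M * v) has_real_derivative k * M) (at v)"
      by (auto intro!: derivative_eq_intros)
    have "0 < sin v" "sin v \<le> 1" using sin_pos_in_open_interval[OF \<open>v \<in> {0<..<pi}\<close>] by auto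
    then have "norm (- lam / (2 * of_real m) * of_real (sin v * tan_half_angle v powr m) * y v)
        = k * sin v * (norm (y v) * tan_half_angle v powr m)"
      using norm_lam_coeff_mult[of "sin v * tan_half_angle v powr m" v] by (simp add: k_def abs_mult)
    also have "\<dots> \<le> k * 1 * M"
      using \<open>0 \<le> k\<close> \<open>0 \<le> M\<close> \<open>0 < sin v\<close> \<open>sin v \<le> 1\<close> bound[OF v]
      by (intro mult_mono mult_left_mono) auto
    finally show "norm (- lam / (2 * of_real m) * of_real (sin v * tan_half_angle v powr m) * y v) \<le> k * M"
      by simp
  qed
  also have "\<dots> \<le> k * M * c"
    using \<open>0 \<le> k\<close> \<open>0 \<le> M\<close> \<open>0 < u\<close> by simp
  finally show ?thesis by (simp add: k_def)
qed

lemma small_coeff_increment_le: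
  assumes "0 < u" "u \<le> c" "c < pi"
    and bound: "\<And>v. v \<in> {u..c} \<Longrightarrow> norm (y v) * tan_half_angle v powr m \<le> M"
  shows "tan_half_angle u powr (2 * m) * norm (small_coeff m y z c - small_coeff m y z u)
    \<le> norm lam / (2 * m) * M * c"
proof -
  define k where "k = norm lam / (2 * m)"
  define Q where "Q = tan_half_angle u powr (- 2 * m)"
  have "0 \<le> k" using \<open>0 < m\<close> by (simp add: k_def)
  have "0 \<le> norm (y u) * tan_half_angle u powr m" by simp
  also have "\<dots> \<le> M" using bound \<open>u \<le> c\<close> by simp
  finally have "0 \<le> M" .
  have "0 < tan_half_angle u" using assms by (simp add: tan_half_angle_pos)
  have "norm (small_coeff m y z c - small_coeff m y z u) \<le> k * M * Q * c - k * M * Q * u"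
  proof (rule norm_increment_le_of_derivative_bound[OF \<open>u \<le> c\<close>])
    fix v assume v: "v \<in> {u..c}"
    then have "v \<in> {0<..<pi}" using assms by auto
    then show "(small_coeff m y z has_vector_derivative
        lam / (2 * of_real m) * of_real (sin v * tan_half_angle v powr (- m)) * y v) (at v)"
      by (rule small_coeff_has_vector_derivative)
    show "((\<lambda>v. k * M * Q * v) has_real_derivative k * M * Q) (at v)"
      by (auto intro!: derivative_eq_intros)
    have "0 < sin v" "sin v \<le> 1" using sin_pos_in_open_interval[OF \<open>v \<in> {0<..<pi}\<close>] by auto
    have "tan_half_angle v powr (- 2 * m) \<le> Q"
      unfolding Q_def using v \<open>0 < m\<close> \<open>0 < u\<close> \<open>0 < tan_half_angle u\<close> \<open>c < pi\<close>
      by (intro powr_mono2' tan_half_angle_mono) auto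
    have "norm (lam / (2 * of_real m) * of_real (sin v * tan_half_angle v powr (- m)) * y v)
        = k * sin v * tan_half_angle v powr (- 2 * m) * (norm (y v) * tan_half_angle v powr m)"
      using norm_lam_coeff_mult[of "sin v * tan_half_angle v powr (- m)" v] \<open>0 < sin v\<close>
      by (simp add: k_def abs_mult mult_ac flip: powr_add)
    also have "\<dots> \<le> k * 1 * Q * M"
      using \<open>0 \<le> k\<close> \<open>0 \<le> M\<close> \<open>0 < sin v\<close> \<open>sin v \<le> 1\<close> bound[OF v] \<open>tan_half_angle v powr (- 2 * m) \<le> Q\<close>
      by (intro mult_mono mult_left_mono) (auto simp: Q_def)
    finally show "norm (lam / (2 * of_real m) * of_real (sin v * tan_half_angle v powr (- m)) * y v)
        \<le> k * M * Q"
      by (simp add: mult_ac)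
  qed
  then have "tan_half_angle u powr (2 * m) * norm (small_coeff m y z c - small_coeff m y z u)
      \<le> tan_half_angle u powr (2 * m) * (k * M * Q * (c - u))"
    by (intro mult_left_mono) (auto simp: algebra_simps)
  also have "\<dots> = k * M * (c - u)"
    using \<open>0 < tan_half_angle u\<close> by (simp add: Q_def flip: powr_add)
  also have "\<dots> \<le> k * M * c"
    using \<open>0 \<le> k\<close> \<open>0 \<le> M\<close> \<open>0 < u\<close> by (intro mult_left_mono) auto
  finally show ?thesis by (simp add: k_def)
qed

text \<open>Starting from the large solution at c, both coefficients move little as t decreases to 0,
  provided |y| T^m stays bounded; a continuity argument closes this circle.\<close>
lemma legendre_system_lower_bound:
  assumes "0 < c" "c < pi" and small: "norm lam * c \<le> m / 4"
    and init: "small_coeff m y z c = 0" "large_coeff m y z c = 1"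
    and t: "0 < t" "t \<le> c"
  shows "1 / 2 \<le> norm (y t) * tan_half_angle t powr m"
proof -
  define U where "U v = norm (y v) * tan_half_angle v powr m" for v
  define P where "P v = (of_real (tan_half_angle v powr (2 * m)) :: complex)" for v
  define k where "k = norm lam / (2 * m)"
  have "k * c \<le> 1 / 8" using small \<open>0 < m\<close> by (simp add: k_def field_simps)
  have U_eq: "U v = norm (P v * small_coeff m y z v + large_coeff m y z v)" if "v \<in> {t..c}" for v
  proof -
    have "U v = norm (of_real (tan_half_angle v powr m) * y v)"
      by (simp add: U_def norm_mult mult.commute)
    then show ?thesis
      using that t \<open>c < pi\<close> small_large_coeff_recombine[OF \<open>0 < m\<close>, of v y z] by (simp add: P_def)
  qed
  have estimates: "norm (large_coeff m y z v - 1) \<le> k * M * c \<and> norm (P v * small_coeff m y z v) \<le> k * M * c"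
    if M: "\<forall>w\<in>{t..c}. U w \<le> M" and v: "v \<in> {t..c}" for M v
    using large_coeff_increment_le[of v c M] small_coeff_increment_le[of v c M] M v t init \<open>c < pi\<close>
    by (auto simp: U_def k_def P_def norm_minus_commute norm_mult)
  have "\<forall>v\<in>{t..c}. U v \<le> 2 * 1"
  proof (rule bound_from_self_improving_bound[OF \<open>t \<le> c\<close>])
    have "{t..c} \<subseteq> {0<..<pi}" using t \<open>c < pi\<close> by auto
    then show "continuous_on {t..c} U"
      unfolding U_def using tan_half_angle_pos
      by (intro continuous_intros legendre_system_continuous_on[OF sys]
          continuous_on_subset[OF continuous_on_tan_half_angle]) force+
    fix M assume M: "\<forall>v\<in>{t..c}. U v \<le> M"
    have "0 \<le> U t" by (simp add: U_def)
    also have "\<dots> \<le> M" using M t by simp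
    finally have "0 \<le> M" .
    show "\<forall>v\<in>{t..c}. U v \<le> 1 + M / 2"
    proof
      fix v assume v: "v \<in> {t..c}"
      have "U v \<le> norm (P v * small_coeff m y z v) + norm (large_coeff m y z v)"
        unfolding U_eq[OF v] by (rule norm_triangle_ineq)
      also have "\<dots> \<le> k * M * c + (1 + k * M * c)"
        using estimates[OF M v] norm_triangle_ineq2[of "large_coeff m y z v" 1] unfolding norm_one
        by linarith
      also have "\<dots> = 1 + 2 * (k * c) * M" by simp
      also have "\<dots> \<le> 1 + 2 * (1 / 8) * M"
        using \<open>k * c \<le> 1 / 8\<close> \<open>0 \<le> M\<close> by (intro add_left_mono mult_right_mono) auto
      finally show "U v \<le> 1 + M / 2" using \<open>0 \<le> M\<close> by simp
    qed
  qed
  then have "norm (large_coeff m y z t - 1) \<le> 1 / 4" "norm (P t * small_coeff m y z t) \<le> 1 / 4"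
    using estimates[of 2 t] \<open>k * c \<le> 1 / 8\<close> t by auto
  moreover have "norm (large_coeff m y z t) - norm (P t * small_coeff m y z t) \<le> U t"
    using U_eq[of t] t norm_diff_ineq[of "large_coeff m y z t" "P t * small_coeff m y z t"]
    by (simp add: add.commute)
  ultimately show ?thesis
    using norm_triangle_ineq2[of 1 "large_coeff m y z t"] by (simp add: U_def norm_minus_commute)
qed

end

section \<open>Solutions from Gegenbauer series\<close>

lemma summable_if_two_step_contraction:
  fixes f :: "nat \<Rightarrow> real"
  assumes nonneg: "\<And>k. 0 \<le> f k" and step: "\<And>k. K \<le> k \<Longrightarrow> f (k + 2) \<le> q * f k"
    and "0 < q" "q < 1"
  shows "summable f"
proof -
  define s where "s = sqrt q"
  have "0 < s" "s < 1" "s\<^sup>2 = q" using \<open>0 < q\<close> \<open>q < 1\<close> by (auto simp: s_def)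
  define C where "C = max (f K / s ^ K) (f (K + 1) / s ^ (K + 1))"
  have bound: "f k \<le> C * s ^ k" if "K \<le> k" for k
    using that
  proof (induction k rule: less_induct)
    case (less k)
    show ?case
    proof (cases "K + 2 \<le> k")
      case True
      define j where "j = k - 2"
      have j: "k = j + 2" "K \<le> j" using True by (auto simp: j_def)
      have "f k \<le> q * f j" using step[OF j(2)] by (simp add: j(1))
      also have "\<dots> \<le> q * (C * s ^ j)" using less.IH[of j] j \<open>0 < q\<close> by (intro mult_left_mono) auto
      also have "\<dots> = C * s ^ k" by (simp add: j(1) \<open>s\<^sup>2 = q\<close>[symmetric] power_add power2_eq_square mult_ac)
      finally show ?thesis .
    next
      case False
      then have "k = K \<or> k = K + 1" using less.prems by auto
      then have "f k / s ^ k \<le> C" by (auto simp: C_def)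
      then show ?thesis using \<open>0 < s\<close> by (simp add: pos_divide_le_eq)
    qed
  qed
  have "summable (\<lambda>k. C * s ^ k)"
    using \<open>0 < s\<close> \<open>s < 1\<close> by (intro summable_mult summable_geometric) simp
  then show ?thesis
    by (rule summable_comparison_test'[where N = K]) (simp add: bound nonneg)
qed

lemma fps_deriv_deriv_nth:
  fixes F :: "'a::comm_ring_1 fps"
  shows "fps_nth (fps_deriv (fps_deriv F)) n = (of_nat n + 1) * (of_nat n + 2) * fps_nth F (n + 2)"
  by (simp add: numeral_2_eq_2 of_nat_Suc algebra_simps)

lemma fps_X_power2_mult_deriv_deriv_nth:
  fixes F :: "'a::comm_ring_1 fps"
  shows "fps_nth (fps_X\<^sup>2 * fps_deriv (fps_deriv F)) n = of_nat n * (of_nat n - 1) * fps_nth F n"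
proof (cases "n < 2")
  case True
  then show ?thesis by (auto simp: fps_X_power_mult_nth less_2_cases_iff)
next
  case False
  then obtain k where "n = k + 2" by (intro that[of "n - 2"]) simp
  then show ?thesis
    by (simp only: fps_X_power_mult_nth) (simp add: fps_deriv_deriv_nth algebra_simps)
qed

lemma fps_X_mult_deriv_nth: "fps_nth (fps_X * fps_deriv F) n = of_nat n * fps_nth F n"
  by (cases n) simp_all

lemma fps_conv_radius_mult_gt:
  fixes f g :: "'a::{banach, real_normed_div_algebra, comm_ring_1} fps"
  assumes "r < fps_conv_radius f" "r < fps_conv_radius g"
  shows "r < fps_conv_radius (f * g)"
  using assms by (intro less_le_trans[OF _ fps_conv_radius_mult]) simp

lemma fps_conv_radius_diff_gt:
  fixes f g :: "'a::{banach, real_normed_div_algebra} fps"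
  assumes "r < fps_conv_radius f" "r < fps_conv_radius g"
  shows "r < fps_conv_radius (f - g)"
  using assms by (intro less_le_trans[OF _ fps_conv_radius_diff]) simp

lemma has_vector_derivative_comp_cos:
  assumes "(f has_field_derivative f') (at (of_real (cos t)))"
  shows "((\<lambda>t. f (of_real (cos t))) has_vector_derivative - of_real (sin t) * f') (at t)"
  using vector_diff_chain_at[of cos "- sin t" t "\<lambda>r. f (of_real r)" f'] assms
  by (simp add: o_def scaleR_conv_of_real has_vector_derivative_real_field
      flip: has_real_derivative_iff_has_vector_derivative)

text \<open>Substituting y(t) = sin t ^ m * w (cos t) turns the Legendre system into the Gegenbauer-type
  equation (1 - x^2) w'' - 2 (m + 1) x w' - (m (m + 1) + lam) w = 0, whose power series solutions
  have the following coefficients.\<close>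
fun gegenbauer_coeff :: "real \<Rightarrow> complex \<Rightarrow> complex \<Rightarrow> complex \<Rightarrow> nat \<Rightarrow> complex" where
  "gegenbauer_coeff m lam a0 a1 0 = a0"
| "gegenbauer_coeff m lam a0 a1 (Suc 0) = a1"
| "gegenbauer_coeff m lam a0 a1 (Suc (Suc k)) =
     ((of_nat k + of_real m) * (of_nat k + of_real m + 1) + lam) / ((of_nat k + 1) * (of_nat k + 2))
     * gegenbauer_coeff m lam a0 a1 k"

definition gegenbauer_fps :: "real \<Rightarrow> complex \<Rightarrow> complex \<Rightarrow> complex \<Rightarrow> complex fps" where
  "gegenbauer_fps m lam a0 a1 = Abs_fps (gegenbauer_coeff m lam a0 a1)"

lemma gegenbauer_fps_ode:
  fixes m lam a0 a1
  defines "F \<equiv> gegenbauer_fps m lam a0 a1"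
  shows "(1 - fps_X\<^sup>2) * fps_deriv (fps_deriv F) - fps_const (2 * (of_real m + 1)) * (fps_X * fps_deriv F)
      - fps_const (of_real m * (of_real m + 1) + lam) * F = 0"
proof (rule fps_ext)
  fix n
  have "(of_nat n + 1) * (of_nat n + 2) = (of_nat ((n + 1) * (n + 2)) :: complex)"
    by (simp add: algebra_simps)
  then have "(of_nat n + 1) * (of_nat n + 2) \<noteq> (0 :: complex)"
    by (simp only: of_nat_eq_0_iff) simp
  then have "fps_nth (fps_deriv (fps_deriv F)) n
      = ((of_nat n + of_real m) * (of_nat n + of_real m + 1) + lam) * fps_nth F n"
    by (simp only: fps_deriv_deriv_nth) (simp add: F_def gegenbauer_fps_def numeral_2_eq_2)
  then show "fps_nth ((1 - fps_X\<^sup>2) * fps_deriv (fps_deriv F) - fps_const (2 * (of_real m + 1)) * (fps_X * fps_deriv F)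
      - fps_const (of_real m * (of_real m + 1) + lam) * F) n = fps_nth 0 n"
    by (simp only: left_diff_distrib mult_1 fps_sub_nth fps_mult_left_const_nth
        fps_X_power2_mult_deriv_deriv_nth fps_X_mult_deriv_nth) (simp add: algebra_simps)
qed

lemma norm_gegenbauer_coeff_add_2_le:
  "norm (gegenbauer_coeff m lam a0 a1 (k + 2))
    \<le> (\<bar>(real k + m) * (real k + m + 1)\<bar> + norm lam) / ((real k + 1) * (real k + 2))
      * norm (gegenbauer_coeff m lam a0 a1 k)"
proof -
  define P Q where "P = (real k + m) * (real k + m + 1)" and "Q = (real k + 1) * (real k + 2)"
  have "0 < Q" by (simp add: Q_def)
  have "gegenbauer_coeff m lam a0 a1 (k + 2) = gegenbauer_coeff m lam a0 a1 (Suc (Suc k))" by simp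
  also have "\<dots> = (of_real P + lam) / of_real Q * gegenbauer_coeff m lam a0 a1 k"
    by (simp add: P_def Q_def)
  finally have "norm (gegenbauer_coeff m lam a0 a1 (k + 2))
      = norm (of_real P + lam) / Q * norm (gegenbauer_coeff m lam a0 a1 k)"
    using \<open>0 < Q\<close> by (simp add: norm_mult norm_divide)
  also have "\<dots> \<le> (\<bar>P\<bar> + norm lam) / Q * norm (gegenbauer_coeff m lam a0 a1 k)"
    using \<open>0 < Q\<close> norm_triangle_ineq[of "of_real P" lam]
    by (intro mult_right_mono divide_right_mono) auto
  finally show ?thesis by (simp add: P_def Q_def)
qed

lemma fps_conv_radius_gegenbauer_fps: "1 \<le> fps_conv_radius (gegenbauer_fps m lam a0 a1)"
proof -
  let ?c = "gegenbauer_coeff m lam a0 a1"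
  have "1 \<le> conv_radius ?c"
  proof (rule conv_radius_geI_ex)
    fix r :: real assume "0 < r" "ereal r < 1"
    define q where "q = (1 + r\<^sup>2) / 2"
    have "r\<^sup>2 < 1" using \<open>0 < r\<close> \<open>ereal r < 1\<close> by (simp add: power_less_one_iff)
    then have "0 < q" "q < 1" "1 < q / r\<^sup>2" using \<open>0 < r\<close> by (auto simp: q_def field_simps add_pos_nonneg)
    define ratio where "ratio k = (\<bar>(real k + m) * (real k + m + 1)\<bar> + norm lam) / ((real k + 1) * (real k + 2))"
      for k
    have "ratio \<longlonglongrightarrow> 1" unfolding ratio_def by real_asymp
    from order_tendstoD(2)[OF this \<open>1 < q / r\<^sup>2\<close>]
    obtain K where K: "\<And>k. K \<le> k \<Longrightarrow> ratio k < q / r\<^sup>2"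
      by (auto simp: eventually_sequentially)
    have "summable (\<lambda>k. norm (?c k) * r ^ k)"
    proof (rule summable_if_two_step_contraction[where K = K and q = q])
      fix k assume "K \<le> k"
      have "norm (?c (k + 2)) * r ^ (k + 2) \<le> ratio k * norm (?c k) * r ^ (k + 2)"
        using norm_gegenbauer_coeff_add_2_le \<open>0 < r\<close> by (intro mult_right_mono) (auto simp: ratio_def)
      also have "\<dots> \<le> q / r\<^sup>2 * norm (?c k) * r ^ (k + 2)"
        using K[OF \<open>K \<le> k\<close>] \<open>0 < r\<close> by (intro mult_right_mono) auto
      also have "\<dots> = q * (norm (?c k) * r ^ k)"
        using \<open>0 < r\<close> by (simp add: power_add power2_eq_square)
      finally show "norm (?c (k + 2)) * r ^ (k + 2) \<le> q * (norm (?c k) * r ^ k)" .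
    qed (use \<open>0 < r\<close> \<open>0 < q\<close> \<open>q < 1\<close> in auto)
    then have "summable (\<lambda>k. norm (?c k * complex_of_real r ^ k))"
      using \<open>0 < r\<close> by (simp add: norm_mult norm_power)
    then have "summable (\<lambda>k. ?c k * complex_of_real r ^ k)"
      by (rule summable_norm_cancel)
    then show "\<exists>z. norm z = r \<and> summable (\<lambda>k. ?c k * z ^ k)"
      using \<open>0 < r\<close> by (intro exI[of _ "of_real r"]) auto
  qed
  then show ?thesis by (simp add: fps_conv_radius_def gegenbauer_fps_def)
qed

lemma norm_less_fps_conv_radius_gegenbauer:
  fixes m :: real and lam a0 a1 x :: complex
  assumes "norm x < 1"
  defines "F \<equiv> gegenbauer_fps m lam a0 a1"
  shows "ereal (norm x) < fps_conv_radius F"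
    and "ereal (norm x) < fps_conv_radius (fps_deriv F)"
    and "ereal (norm x) < fps_conv_radius (fps_deriv (fps_deriv F))"
proof -
  have "ereal (norm x) < 1" using assms by simp
  then show F: "ereal (norm x) < fps_conv_radius F"
    unfolding F_def using fps_conv_radius_gegenbauer_fps by (rule less_le_trans)
  then show DF: "ereal (norm x) < fps_conv_radius (fps_deriv F)"
    using fps_conv_radius_deriv less_le_trans by blast
  then show "ereal (norm x) < fps_conv_radius (fps_deriv (fps_deriv F))"
    using fps_conv_radius_deriv less_le_trans by blast
qed

lemma gegenbauer_series_ode:
  fixes m :: real and lam a0 a1 x :: complex
  assumes "norm x < 1"
  defines "F \<equiv> gegenbauer_fps m lam a0 a1"
  shows "(1 - x\<^sup>2) * eval_fps (fps_deriv (fps_deriv F)) x - 2 * (of_real m + 1) * x * eval_fps (fps_deriv F) x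
      - (of_real m * (of_real m + 1) + lam) * eval_fps F x = 0"
proof -
  have poly: "ereal (norm x) < fps_conv_radius (1 - fps_X\<^sup>2 :: complex fps)"
    by (intro fps_conv_radius_diff_gt) simp_all
  have "0 = eval_fps ((1 - fps_X\<^sup>2) * fps_deriv (fps_deriv F) - fps_const (2 * (of_real m + 1)) * (fps_X * fps_deriv F)
      - fps_const (of_real m * (of_real m + 1) + lam) * F) x"
    using gegenbauer_fps_ode[of m lam a0 a1] by (simp add: F_def)
  also have "\<dots> = (1 - x\<^sup>2) * eval_fps (fps_deriv (fps_deriv F)) x - 2 * (of_real m + 1) * x * eval_fps (fps_deriv F) x
      - (of_real m * (of_real m + 1) + lam) * eval_fps F x"
    using norm_less_fps_conv_radius_gegenbauer[OF assms(1), of m lam a0 a1] poly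
    by (simp add: F_def eval_fps_diff eval_fps_mult fps_conv_radius_diff_gt fps_conv_radius_mult_gt mult.assoc)
  finally show ?thesis ..
qed

lemma gegenbauer_transform_identity:
  fixes P S C M lam W W' W'' :: complex
  assumes "S \<noteq> 0" "S\<^sup>2 + C\<^sup>2 = 1"
    and ode: "S\<^sup>2 * W'' = 2 * (M + 1) * C * W' + (M * (M + 1) + lam) * W"
  shows "P * ((M * C * (- S * W') + M * (- S) * W) - (S\<^sup>2 * (- S * W'') + 2 * S * C * W'))
      + P * (M * C / S) * (M * C * W - S\<^sup>2 * W') = (lam * S + M\<^sup>2 / S) * (P * W)"
proof -
  have "C * C = 1 - S * S"
    using \<open>S\<^sup>2 + C\<^sup>2 = 1\<close> by (simp add: power2_eq_square algebra_simps flip: eq_diff_eq)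
  then have cos_sq: "C * (C * X) = X - S * (S * X)" for X
    by (simp add: mult.assoc[symmetric] left_diff_distrib)
  from \<open>S \<noteq> 0\<close> ode show ?thesis
    by (simp add: field_simps power2_eq_square) (simp add: cos_sq algebra_simps)
qed

lemma legendre_system_from_gegenbauer:
  fixes w w' w'' :: "complex \<Rightarrow> complex"
  assumes w': "\<And>x. norm x < 1 \<Longrightarrow> (w has_field_derivative w' x) (at x)"
    and w'': "\<And>x. norm x < 1 \<Longrightarrow> (w' has_field_derivative w'' x) (at x)"
    and ode: "\<And>x. norm x < 1 \<Longrightarrow>
      (1 - x\<^sup>2) * w'' x - 2 * (of_real m + 1) * x * w' x - (of_real m * (of_real m + 1) + lam) * w x = 0"
  shows "legendre_system m lam (\<lambda>t. of_real (sin t powr m) * w (of_real (cos t)))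
    (\<lambda>t. of_real (sin t powr m)
      * (of_real m * of_real (cos t) * w (of_real (cos t)) - (of_real (sin t))\<^sup>2 * w' (of_real (cos t))))"
  unfolding legendre_system_def
proof (intro ballI conjI)
  fix t :: real assume t: "t \<in> {0<..<pi}"
  define S C P M where "S = complex_of_real (sin t)" and "C = complex_of_real (cos t)"
    and "P = complex_of_real (sin t powr m)" and "M = complex_of_real m"
  have "0 < sin t" using t by (rule sin_pos_in_open_interval)
  then have "S \<noteq> 0" by (simp add: S_def)
  have "S\<^sup>2 + C\<^sup>2 = 1"
    unfolding S_def C_def by (simp flip: of_real_power of_real_add)
  have "(cos t)\<^sup>2 < 1"
    using \<open>0 < sin t\<close> sin_cos_squared_add[of t] zero_less_power[of "sin t" 2] by linarith
  then have "norm C < 1" by (simp add: C_def abs_square_less_1)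
  have dP: "((\<lambda>t. of_real (sin t powr m)) has_vector_derivative P * (M * C / S)) (at t)"
    by (rule has_vector_derivative_eq_rhs[OF has_vector_derivative_of_real[where 'a = complex,
          OF DERIV_powr[OF DERIV_sin \<open>0 < sin t\<close> DERIV_const[of m]]]])
      (simp add: P_def M_def C_def S_def)
  have dC: "((\<lambda>t. of_real (cos t)) has_vector_derivative - S) (at t)"
    using has_vector_derivative_of_real[OF DERIV_cos[of t]] by (simp add: S_def)
  have dS: "((\<lambda>t. of_real (sin t)) has_vector_derivative C) (at t)"
    using has_vector_derivative_of_real[OF DERIV_sin[of t]] by (simp add: C_def)
  have dw: "((\<lambda>t. w (of_real (cos t))) has_vector_derivative - S * w' C) (at t)"
    unfolding S_def C_def using \<open>norm C < 1\<close> by (intro has_vector_derivative_comp_cos w') (simp add: C_def)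
  have dw': "((\<lambda>t. w' (of_real (cos t))) has_vector_derivative - S * w'' C) (at t)"
    unfolding S_def C_def using \<open>norm C < 1\<close> by (intro has_vector_derivative_comp_cos w'') (simp add: C_def)
  show "((\<lambda>t. of_real (sin t powr m) * w (of_real (cos t))) has_vector_derivative
      of_real (sin t powr m) * (of_real m * of_real (cos t) * w (of_real (cos t))
        - (of_real (sin t))\<^sup>2 * w' (of_real (cos t))) / of_real (sin t)) (at t)"
    by (rule has_vector_derivative_eq_rhs[OF has_vector_derivative_mult[OF dP dw]])
      (use \<open>S \<noteq> 0\<close> in \<open>simp add: S_def C_def P_def M_def field_simps power2_eq_square\<close>)
  have "1 - C\<^sup>2 = S\<^sup>2" using \<open>S\<^sup>2 + C\<^sup>2 = 1\<close> by (simp add: algebra_simps)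
  then have "S\<^sup>2 * w'' C - 2 * (M + 1) * C * w' C - (M * (M + 1) + lam) * w C = 0"
    using ode[OF \<open>norm C < 1\<close>] by (simp add: M_def)
  then have ode_C: "S\<^sup>2 * w'' C = 2 * (M + 1) * C * w' C + (M * (M + 1) + lam) * w C"
    by (simp add: diff_eq_eq algebra_simps)
  show "((\<lambda>t. of_real (sin t powr m)
      * (of_real m * of_real (cos t) * w (of_real (cos t)) - (of_real (sin t))\<^sup>2 * w' (of_real (cos t))))
      has_vector_derivative (lam * of_real (sin t) + of_real (m\<^sup>2 / sin t))
        * (of_real (sin t powr m) * w (of_real (cos t)))) (at t)"
  proof (rule has_vector_derivative_eq_rhs)
    have dA: "((\<lambda>t. of_real m * of_real (cos t) * w (of_real (cos t))) has_vector_derivative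
        M * C * (- S * w' C) + M * (- S) * w C) (at t)"
      using has_vector_derivative_mult[OF has_vector_derivative_mult_right[OF dC, of M] dw]
      by (simp add: C_def M_def)
    have dB: "((\<lambda>t. (of_real (sin t))\<^sup>2 * w' (of_real (cos t))) has_vector_derivative
        S\<^sup>2 * (- S * w'' C) + 2 * S * C * w' C) (at t)"
      using has_vector_derivative_mult[OF has_vector_derivative_mult[OF dS dS] dw']
      by (simp add: S_def C_def power2_eq_square algebra_simps)
    from has_vector_derivative_mult[OF dP has_vector_derivative_diff[OF dA dB]]
    show "((\<lambda>t. of_real (sin t powr m)
        * (of_real m * of_real (cos t) * w (of_real (cos t)) - (of_real (sin t))\<^sup>2 * w' (of_real (cos t))))
        has_vector_derivative P * ((M * C * (- S * w' C) + M * (- S) * w C) - (S\<^sup>2 * (- S * w'' C) + 2 * S * C * w' C))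
          + P * (M * C / S) * (M * C * w C - S\<^sup>2 * w' C)) (at t)"
      by (simp add: S_def C_def M_def P_def)
    show "P * ((M * C * (- S * w' C) + M * (- S) * w C) - (S\<^sup>2 * (- S * w'' C) + 2 * S * C * w' C))
          + P * (M * C / S) * (M * C * w C - S\<^sup>2 * w' C)
        = (lam * of_real (sin t) + of_real (m\<^sup>2 / sin t)) * (of_real (sin t powr m) * w (of_real (cos t)))"
      using gegenbauer_transform_identity[OF \<open>S \<noteq> 0\<close> \<open>S\<^sup>2 + C\<^sup>2 = 1\<close> ode_C, of P]
      by (simp add: S_def C_def P_def M_def)
  qed
qed

lemma legendre_system_gegenbauer_solution:
  "\<exists>y z. legendre_system m lam y z \<and> y (pi / 2) = a0 \<and> z (pi / 2) = - a1"
proof -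
  define F where "F = gegenbauer_fps m lam a0 a1"
  define y where "y t = of_real (sin t powr m) * eval_fps F (of_real (cos t))" for t
  define z where "z t = of_real (sin t powr m) * (of_real m * of_real (cos t) * eval_fps F (of_real (cos t))
      - (of_real (sin t))\<^sup>2 * eval_fps (fps_deriv F) (of_real (cos t)))" for t
  have "legendre_system m lam y z"
    unfolding y_def[abs_def] z_def[abs_def]
    using norm_less_fps_conv_radius_gegenbauer gegenbauer_series_ode
    by (intro legendre_system_from_gegenbauer[where w'' = "eval_fps (fps_deriv (fps_deriv F))"])
      (auto simp: F_def has_field_derivative_eval_fps)
  moreover have "y (pi / 2) = a0" "z (pi / 2) = - a1"
    by (simp_all add: y_def z_def F_def gegenbauer_fps_def eval_fps_at_0)
  ultimately show ?thesis by blast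
qed

lemma legendre_system_exists:
  assumes "c \<in> {0<..<pi}"
  shows "\<exists>y z. legendre_system m lam y z \<and> y c = y0 \<and> z c = z0"
proof -
  obtain y1 z1 where s1: "legendre_system m lam y1 z1" and v1: "y1 (pi / 2) = 1" "z1 (pi / 2) = 0"
    using legendre_system_gegenbauer_solution[of m lam 1 0] by auto
  obtain y2 z2 where s2: "legendre_system m lam y2 z2" and v2: "y2 (pi / 2) = 0" "z2 (pi / 2) = -1"
    using legendre_system_gegenbauer_solution[of m lam 0 1] by auto
  obtain w where w: "\<forall>t\<in>{0<..<pi}. y1 t * z2 t - z1 t * y2 t = w"
    using legendre_system_wronskian_constant[OF s1 s2] by blast
  have "pi / 2 \<in> {0<..<pi}" by simp
  then have "y1 (pi / 2) * z2 (pi / 2) - z1 (pi / 2) * y2 (pi / 2) = w" using w by blast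
  then have "w = -1" using v1 v2 by simp
  then have wronskian: "y1 c * z2 c - z1 c * y2 c = -1"
    using w assms by blast
  define a b where "a = z0 * y2 c - y0 * z2 c" and "b = y0 * z1 c - z0 * y1 c"
  have "legendre_system m lam (\<lambda>t. a * y1 t + b * y2 t) (\<lambda>t. a * z1 t + b * z2 t)"
    using s1 s2 by (rule legendre_system_lincomb)
  moreover have "a * y1 c + b * y2 c = - y0 * (y1 c * z2 c - z1 c * y2 c)"
    "a * z1 c + b * z2 c = - z0 * (y1 c * z2 c - z1 c * y2 c)"
    by (simp_all add: a_def b_def algebra_simps)
  ultimately show ?thesis using wronskian by auto
qed

lemma not_LC_at_0:
  assumes "1 \<le> \<bar>n\<bar>"
  shows "\<not> LC_at_0 n chi"
proof
  assume LC: "LC_at_0 n chi"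
  define m lam where "m = \<bar>n\<bar>" and "lam = chi - of_real (n * (n + 1))"
  have "0 < m" "1 \<le> m" using assms by (auto simp: m_def)
  define L where "L = norm lam + 1"
  have "0 < L" using norm_ge_zero[of lam] unfolding L_def by linarith
  define c where "c = min (pi / 2) (m / (4 * L))"
  have "0 < c" using \<open>0 < m\<close> \<open>0 < L\<close> by (simp add: c_def)
  have "c \<le> pi / 2" unfolding c_def by (rule min.cobounded1)
  then have "c < pi" using pi_gt_zero by linarith
  have "norm lam * c \<le> L * (m / (4 * L))"
    using \<open>0 < c\<close> by (intro mult_mono) (auto simp: c_def L_def)
  also have "\<dots> = m / 4"
    using \<open>0 < L\<close> by simp
  finally have "norm lam * c \<le> m / 4" .
  \<comment> \<open>the solution that coincides at c with the large solution T^(-m) for lam = 0\<close>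
  obtain y z where sys: "legendre_system m lam y z"
    and init: "y c = of_real (tan_half_angle c powr (- m))" "z c = - of_real m * of_real (tan_half_angle c powr (- m))"
    using legendre_system_exists \<open>0 < c\<close> \<open>c < pi\<close> by fastforce
  have "tan_half_angle c powr m * tan_half_angle c powr (- m) = 1"
    using tan_half_angle_pos[OF \<open>0 < c\<close> \<open>c < pi\<close>] by (simp flip: powr_add)
  then have "small_coeff m y z c = 0" "large_coeff m y z c = 1"
    using \<open>0 < m\<close> by (simp_all add: small_coeff_def large_coeff_def init field_simps flip: of_real_mult)
  note lower = legendre_system_lower_bound[OF sys \<open>0 < m\<close> \<open>0 < c\<close> \<open>c < pi\<close> \<open>norm lam * c \<le> m / 4\<close> this]
  have "legendre_sol n chi y"
    using sys by (auto simp: legendre_sol_iff_system m_def lam_def)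
  then obtain c' where "c' \<in> {0<..<pi}" "L2_sin y 0 c'"
    using LC unfolding LC_at_0_def by blast
  have "L2_sin y 0 (min c c')"
    using L2_sin_subinterval[OF \<open>L2_sin y 0 c'\<close>] by simp
  moreover have "\<not> L2_sin y 0 (min c c')"
    using \<open>1 \<le> m\<close> \<open>0 < c\<close> \<open>c \<le> pi / 2\<close> \<open>c' \<in> {0<..<pi}\<close> lower
    by (intro not_L2_sin_0_if_norm_ge_tan_half_angle_powr[where delta = "1 / 2"]) auto
  ultimately show False by contradiction
qed

theorem proposition5p1:
  fixes n :: real and chi :: complex
  shows "LC n chi \<longleftrightarrow> n \<in> {-1<..<1}"
proof
  assume "LC n chi"
  then have "\<not> 1 \<le> \<bar>n\<bar>"
    using not_LC_at_0[of n chi] by (auto simp: LC_def)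
  then show "n \<in> {-1<..<1}"
    by (simp add: not_le abs_less_iff)
next
  assume "n \<in> {-1<..<1}"
  then have "\<bar>n\<bar> < 1" by auto
  have "LC_at_0 n chi"
    unfolding LC_at_0_def legendre_sol_iff_system
    using legendre_system_L2_sin_at_0 \<open>\<bar>n\<bar> < 1\<close> by auto
  moreover have "LC_at_pi n chi"
    unfolding LC_at_pi_def legendre_sol_iff_system
  proof (intro allI impI, elim exE)
    fix y z assume "legendre_system \<bar>n\<bar> (chi - of_real (n * (n + 1))) y z"
    from legendre_system_L2_sin_at_0[OF legendre_system_reflect[OF this]] \<open>\<bar>n\<bar> < 1\<close>
    obtain c where "c \<in> {0<..<pi}" "L2_sin (\<lambda>t. y (pi - t)) 0 c" by auto
    then show "\<exists>c\<in>{0<..<pi}. L2_sin y c pi"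
      using L2_sin_reflect by (intro bexI[of _ "pi - c"]) auto
  qed
  ultimately show "LC n chi" by (simp add: LC_def)
qed

end
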